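(* Let $p$ be a prime, $R$ a Noetherian $\mathbb{F}_p$-algebra and $(\sigma,\delta)$ a skew derivation on $R$ with $\sigma\delta=\delta\sigma$. If $i,j,k,n\in\mathbb{N}$ satisfy $[i]+[j]+[k]=[n]$, then $i+j+k=n$. Furthermore, for any $a,b,x\in R$ and $n\in\mathbb{N}$, there exist $\alpha_{i,j,k}\in\mathbb{F}_p^\times$ such that $$\delta^n(axb)=\sum_{[i]+[j]+[k]=[n]}\alpha_{i,j,k}\,\delta^i\sigma^{n-i}(a)\,\delta^j\sigma^k(x)\,\delta^k(b).$$
   Context: A skew derivation is a pair $(\sigma,\delta)$ with $\sigma$ an automorphism and $\delta(ab)=\delta(a)b+\sigma(a)\delta(b)$; composition is written as concatenation. For $n\in\mathbb{N}$ with base-$p$ expansion $n=a_0+a_1p+\cdots+a_rp^r$ ($0\le a_i<p$), $[n]=[n]_p$ denotes the sequence $(a_0,a_1,\dots)\in\mathbb{N}^\infty$ with $a_i=0$ for $i>r$; sums $[i]+[j]+[k]$ are taken componentwise, and the sum in the formula runs over all triples $(i,j,k)$ with $[i]+[j]+[k]=[n]$. *)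

theory Defs
  imports Main "HOL-Computational_Algebra.Primes"
begin

definition pdigit :: "nat \<Rightarrow> nat \<Rightarrow> nat \<Rightarrow> nat" where
  "pdigit p n t = (n div p ^ t) mod p"

definition digit_split :: "nat \<Rightarrow> nat \<Rightarrow> nat \<Rightarrow> nat \<Rightarrow> nat \<Rightarrow> bool" where
  "digit_split p i j k n \<longleftrightarrow> (\<forall>t. pdigit p i t + pdigit p j t + pdigit p k t = pdigit p n t)"

definition left_ideal :: "'a::ring_1 set \<Rightarrow> bool" where
  "left_ideal I \<longleftrightarrow> 0 \<in> I \<and> (\<forall>x\<in>I. \<forall>y\<in>I. x + y \<in> I) \<and> (\<forall>r. \<forall>x\<in>I. r * x \<in> I)"

definition right_ideal :: "'a::ring_1 set \<Rightarrow> bool" where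
  "right_ideal I \<longleftrightarrow> 0 \<in> I \<and> (\<forall>x\<in>I. \<forall>y\<in>I. x + y \<in> I) \<and> (\<forall>r. \<forall>x\<in>I. x * r \<in> I)"

definition noetherian_ring :: "'a::ring_1 itself \<Rightarrow> bool" where
  "noetherian_ring _ \<longleftrightarrow>
     (\<forall>I::nat \<Rightarrow> 'a set. (\<forall>m. left_ideal (I m)) \<and> (\<forall>m. I m \<subseteq> I (Suc m)) \<longrightarrow> (\<exists>m. \<forall>n\<ge>m. I n = I m)) \<and>
     (\<forall>I::nat \<Rightarrow> 'a set. (\<forall>m. right_ideal (I m)) \<and> (\<forall>m. I m \<subseteq> I (Suc m)) \<longrightarrow> (\<exists>m. \<forall>n\<ge>m. I n = I m))"

definition ring_automorphism :: "('a::ring_1 \<Rightarrow> 'a) \<Rightarrow> bool" where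
  "ring_automorphism \<sigma> \<longleftrightarrow> bij \<sigma> \<and> (\<forall>a b. \<sigma> (a + b) = \<sigma> a + \<sigma> b) \<and>
     (\<forall>a b. \<sigma> (a * b) = \<sigma> a * \<sigma> b) \<and> \<sigma> 1 = 1"

definition skew_derivation :: "('a::ring_1 \<Rightarrow> 'a) \<Rightarrow> ('a \<Rightarrow> 'a) \<Rightarrow> bool" where
  "skew_derivation \<sigma> \<delta> \<longleftrightarrow> ring_automorphism \<sigma> \<and> (\<forall>a b. \<delta> (a + b) = \<delta> a + \<delta> b) \<and>
     (\<forall>a b. \<delta> (a * b) = \<delta> a * b + \<sigma> a * \<delta> b)"

end

theory Submission
  imports Defs HOL.Modules
begin

(* Write n = r + p m with r < p. Applying the twisted Leibniz rule twice expands \<delta>^r(a x b) over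
   all triples summing to r, with trinomial coefficients r!/(i! j! k!), which are prime to p
   because r < p. In characteristic p the binomial coefficients (p choose k), 0 < k < p, vanish,
   so (\<sigma>^p, \<delta>^p) is again a commuting skew derivation; by induction on n, \<delta>^(p m) = (\<delta>^p)^m
   expands over the triples whose digits add up to those of m without carries. Applying \<delta>^r to
   each of these terms appends a last digit, again without carry, and multiplies the
   coefficients, which therefore stay prime to p. *)

lemma sum_choose_pascal:
  fixes G :: "nat \<Rightarrow> 'a::semiring_1"
  shows "(\<Sum>k\<le>n. of_nat (n choose k) * (G k + G (Suc k))) =
    (\<Sum>k\<le>Suc n. of_nat (Suc n choose k) * G k)"
proof -
  have "(\<Sum>k\<le>n. of_nat (n choose k) * G k) = (\<Sum>k\<le>Suc n. of_nat (n choose k) * G k)"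
    by (simp add: binomial_eq_0)
  also have "\<dots> = G 0 + (\<Sum>k\<le>n. of_nat (n choose Suc k) * G (Suc k))"
    by (subst sum.atMost_Suc_shift) simp
  finally have "(\<Sum>k\<le>n. of_nat (n choose k) * G k) =
      G 0 + (\<Sum>k\<le>n. of_nat (n choose Suc k) * G (Suc k))" .
  moreover have "(\<Sum>k\<le>Suc n. of_nat (Suc n choose k) * G k) =
      G 0 + (\<Sum>k\<le>n. of_nat (n choose Suc k) * G (Suc k)) + (\<Sum>k\<le>n. of_nat (n choose k) * G (Suc k))"
    by (subst sum.atMost_Suc_shift) (simp add: sum.distrib distrib_right add_ac)
  ultimately show ?thesis
    by (simp add: distrib_left sum.distrib add_ac)
qed

lemma additive_funpow:
  fixes f :: "'a::ab_group_add \<Rightarrow> 'a"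
  shows "additive f \<Longrightarrow> additive (f ^^ n)"
  by (induction n) (auto simp: additive_def)

lemma additive_of_nat_mult:
  fixes f :: "'a::ring_1 \<Rightarrow> 'b::ring_1"
  assumes "additive f"
  shows "f (of_nat c * x) = of_nat c * f x"
  using additive.sum[OF assms, of "\<lambda>_. x" "{..<c}"] by simp

lemma of_nat_eq_0_if_dvd:
  "of_nat p = (0::'a::semiring_1) \<Longrightarrow> p dvd q \<Longrightarrow> of_nat q = (0::'a)"
  by (metis of_nat_eq_0_iff_char_dvd dvd_trans)

lemma of_nat_mod_eq_if_of_nat_eq_0:
  assumes "of_nat p = (0::'a::semiring_1)"
  shows "of_nat (q mod p) = (of_nat q :: 'a)"
proof -
  have "(of_nat q :: 'a) = of_nat p * of_nat (q div p) + of_nat (q mod p)"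
    by (metis mult_div_mod_eq of_nat_add of_nat_mult)
  then show ?thesis
    by (simp add: assms)
qed

lemma prime_not_dvd_choose:
  assumes "prime p" and "n < p" and "k \<le> n"
  shows "\<not> p dvd (n choose k)"
proof
  assume "p dvd (n choose k)"
  then have "p dvd fact n"
    using binomial_fact_lemma[OF assms(3)] by (metis dvd_mult)
  then show False
    using prime_dvd_fact_iff[OF assms(1)] assms(2) by simp
qed

definition triples_with_sum :: "nat \<Rightarrow> (nat \<times> nat \<times> nat) set" where
  "triples_with_sum n = {(i, j, k). i + j + k = n}"

definition trinomial :: "nat \<times> nat \<times> nat \<Rightarrow> nat" where
  "trinomial = (\<lambda>(i, j, k). (i + j + k choose k) * (i + j choose j))"

lemma prime_not_dvd_trinomial:
  assumes "prime p" and "i + j + k < p"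
  shows "\<not> p dvd trinomial (i, j, k)"
  using assms prime_not_dvd_choose[of p "i + j + k" k] prime_not_dvd_choose[of p "i + j" j]
  by (simp add: trinomial_def prime_dvd_mult_iff)

lemma sum_triples_with_sum:
  "(\<Sum>t\<in>triples_with_sum n. h t) = (\<Sum>k\<le>n. \<Sum>j\<le>n - k. h (n - k - j, j, k))"
proof -
  have "(\<Sum>k\<le>n. \<Sum>j\<le>n - k. h (n - k - j, j, k)) =
      (\<Sum>(k, j)\<in>Sigma {..n} (\<lambda>k. {..n - k}). h (n - k - j, j, k))"
    by (rule sum.Sigma) auto
  also have "\<dots> = (\<Sum>t\<in>triples_with_sum n. h t)"
    by (rule sum.reindex_bij_witness[where i="\<lambda>(i, j, k). (k, j)" and j="\<lambda>(k, j). (n - k - j, j, k)"])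
      (auto simp: triples_with_sum_def)
  finally show ?thesis ..
qed

(* On triples with i + j + k = n the exponent j + k is the paper's n - i. *)
definition skew_monomial ::
  "('a::ring_1 \<Rightarrow> 'a) \<Rightarrow> ('a \<Rightarrow> 'a) \<Rightarrow> 'a \<Rightarrow> 'a \<Rightarrow> 'a \<Rightarrow> nat \<times> nat \<times> nat \<Rightarrow> 'a" where
  "skew_monomial \<sigma> \<delta> a x b =
     (\<lambda>(i, j, k). (\<delta> ^^ i) ((\<sigma> ^^ (j + k)) a) * (\<delta> ^^ j) ((\<sigma> ^^ k) x) * (\<delta> ^^ k) b)"

lemma skew_monomial_funpow:
  "skew_monomial (\<sigma> ^^ p) (\<delta> ^^ p) a x b (i, j, k) = skew_monomial \<sigma> \<delta> a x b (p * i, p * j, p * k)"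
  by (simp add: skew_monomial_def funpow_mult add_mult_distrib2)

locale commuting_sigma_derivation =
  fixes \<sigma> \<delta> :: "'a::ring_1 \<Rightarrow> 'a"
  assumes \<sigma>_add: "\<sigma> (a + b) = \<sigma> a + \<sigma> b"
    and \<sigma>_mult: "\<sigma> (a * b) = \<sigma> a * \<sigma> b"
    and \<delta>_add: "\<delta> (a + b) = \<delta> a + \<delta> b"
    and \<delta>_mult: "\<delta> (a * b) = \<delta> a * b + \<sigma> a * \<delta> b"
    and \<sigma>_\<delta>_commute: "\<sigma> (\<delta> a) = \<delta> (\<sigma> a)"
begin

lemma additive_\<delta>: "additive \<delta>"
  by (simp add: additive_def \<delta>_add)

lemma additive_\<delta>_power: "additive (\<delta> ^^ n)"
  by (rule additive_funpow[OF additive_\<delta>])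

lemma \<sigma>_power_mult: "(\<sigma> ^^ n) (a * b) = (\<sigma> ^^ n) a * (\<sigma> ^^ n) b"
  by (induction n) (simp_all add: \<sigma>_mult)

lemma \<sigma>_\<delta>_power_commute: "\<sigma> ((\<delta> ^^ n) a) = (\<delta> ^^ n) (\<sigma> a)"
  by (induction n) (simp_all add: \<sigma>_\<delta>_commute)

lemma \<sigma>_power_\<delta>_power_commute: "(\<sigma> ^^ m) ((\<delta> ^^ n) a) = (\<delta> ^^ n) ((\<sigma> ^^ m) a)"
  by (induction m) (simp_all add: \<sigma>_\<delta>_power_commute)

lemma leibniz_rule:
  "(\<delta> ^^ n) (a * b) = (\<Sum>k\<le>n. of_nat (n choose k) * ((\<delta> ^^ (n - k)) ((\<sigma> ^^ k) a) * (\<delta> ^^ k) b))"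
proof (induction n)
  case 0
  then show ?case by simp
next
  case (Suc n)
  define G where "G k = (\<delta> ^^ (Suc n - k)) ((\<sigma> ^^ k) a) * (\<delta> ^^ k) b" for k
  have step: "\<delta> ((\<delta> ^^ (n - k)) ((\<sigma> ^^ k) a) * (\<delta> ^^ k) b) = G k + G (Suc k)" if "k \<le> n" for k
    using that by (simp add: G_def \<delta>_mult \<sigma>_\<delta>_power_commute Suc_diff_le)
  have "(\<delta> ^^ Suc n) (a * b) = (\<Sum>k\<le>n. of_nat (n choose k) * (G k + G (Suc k)))"
    by (simp add: Suc.IH additive.sum[OF additive_\<delta>] additive_of_nat_mult[OF additive_\<delta>] step)
  also have "\<dots> = (\<Sum>k\<le>Suc n. of_nat (Suc n choose k) * G k)"
    by (rule sum_choose_pascal)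
  finally show ?case
    by (simp add: G_def)
qed

lemma trinomial_expansion:
  "(\<delta> ^^ n) (a * x * b) =
     (\<Sum>t\<in>triples_with_sum n. of_nat (trinomial t) * skew_monomial \<sigma> \<delta> a x b t)"
proof -
  have "(\<delta> ^^ n) (a * x * b) =
      (\<Sum>k\<le>n. of_nat (n choose k) * ((\<delta> ^^ (n - k)) ((\<sigma> ^^ k) a * (\<sigma> ^^ k) x) * (\<delta> ^^ k) b))"
    by (simp add: leibniz_rule \<sigma>_power_mult)
  also have "\<dots> = (\<Sum>k\<le>n. \<Sum>j\<le>n - k.
      of_nat (trinomial (n - k - j, j, k)) * skew_monomial \<sigma> \<delta> a x b (n - k - j, j, k))"
    by (intro sum.cong refl)
      (simp add: leibniz_rule sum_distrib_left sum_distrib_right trinomial_def skew_monomial_def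
        funpow_add mult.assoc)
  finally show ?thesis
    by (simp add: sum_triples_with_sum)
qed

lemma \<delta>_power_skew_monomial:
  "(\<delta> ^^ r) (skew_monomial \<sigma> \<delta> a x b (i, j, k)) =
     (\<Sum>(i', j', k')\<in>triples_with_sum r.
        of_nat (trinomial (i', j', k')) * skew_monomial \<sigma> \<delta> a x b (i' + i, j' + j, k' + k))"
proof -
  have funpow_funpow: "(f ^^ m) ((f ^^ n) y) = (f ^^ (m + n)) y" for f :: "'a \<Rightarrow> 'a" and m n y
    by (simp add: funpow_add)
  have shift: "skew_monomial \<sigma> \<delta> ((\<delta> ^^ i) ((\<sigma> ^^ (j + k)) a)) ((\<delta> ^^ j) ((\<sigma> ^^ k) x)) ((\<delta> ^^ k) b) t =
      (case t of (i', j', k') \<Rightarrow> skew_monomial \<sigma> \<delta> a x b (i' + i, j' + j, k' + k))" for t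
    by (cases t) (simp add: skew_monomial_def \<sigma>_power_\<delta>_power_commute funpow_funpow add_ac)
  show ?thesis
    by (simp add: skew_monomial_def[of _ _ a x b] trinomial_expansion shift split_def)
qed

lemma frobenius:
  assumes "prime p" and "of_nat p = (0::'a)"
  shows "commuting_sigma_derivation (\<sigma> ^^ p) (\<delta> ^^ p)"
proof
  fix a b :: 'a
  show "(\<sigma> ^^ p) (a + b) = (\<sigma> ^^ p) a + (\<sigma> ^^ p) b"
    using additive_funpow[of \<sigma> p] by (simp add: additive_def \<sigma>_add)
  show "(\<sigma> ^^ p) (a * b) = (\<sigma> ^^ p) a * (\<sigma> ^^ p) b"
    by (rule \<sigma>_power_mult)
  show "(\<delta> ^^ p) (a + b) = (\<delta> ^^ p) a + (\<delta> ^^ p) b"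
    by (rule additive.add[OF additive_\<delta>_power])
  show "(\<sigma> ^^ p) ((\<delta> ^^ p) a) = (\<delta> ^^ p) ((\<sigma> ^^ p) a)"
    by (rule \<sigma>_power_\<delta>_power_commute)
  have vanish: "of_nat (p choose k) = (0::'a)" if "0 < k" and "k < p" for k
    using that assms by (intro of_nat_eq_0_if_dvd[OF assms(2)] dvd_choose_prime) auto
  have "(\<delta> ^^ p) (a * b) =
      (\<Sum>k\<in>{0, p}. of_nat (p choose k) * ((\<delta> ^^ (p - k)) ((\<sigma> ^^ k) a) * (\<delta> ^^ k) b))"
    unfolding leibniz_rule by (rule sum.mono_neutral_right) (auto simp: vanish)
  then show "(\<delta> ^^ p) (a * b) = (\<delta> ^^ p) a * b + (\<sigma> ^^ p) a * (\<delta> ^^ p) b"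
    using prime_gt_0_nat[OF assms(1)] by simp
qed

end

lemma digit_split_iff_last_digit:
  "digit_split p i j k n \<longleftrightarrow>
     i mod p + j mod p + k mod p = n mod p \<and>
     digit_split p (i div p) (j div p) (k div p) (n div p)"
proof -
  have all_nat: "(\<forall>t. Q t) \<longleftrightarrow> Q 0 \<and> (\<forall>t. Q (Suc t))" for Q :: "nat \<Rightarrow> bool"
    by (metis not0_implies_Suc)
  show ?thesis
    unfolding digit_split_def by (subst all_nat) (simp add: pdigit_def div_mult2_eq)
qed

lemma digit_split_imp_sum:
  assumes "1 < p" and "digit_split p i j k n"
  shows "i + j + k = n"
  using assms(2)
proof (induction "i + j + k + n" arbitrary: i j k n rule: less_induct)
  case less
  show ?case
  proof (cases "i + j + k + n = 0")
    case False
    have "x div p < x \<or> x = 0" for x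
      using assms(1) by auto
    then have "i div p + j div p + k div p + n div p < i + j + k + n"
      using False div_le_dividend[of i p] div_le_dividend[of j p] div_le_dividend[of k p]
        div_le_dividend[of n p]
      by (metis add_le_mono add_less_le_mono add_le_less_mono add_is_0)
    then have "i div p + j div p + k div p = n div p"
      using less digit_split_iff_last_digit by blast
    moreover have "i mod p + j mod p + k mod p = n mod p"
      using less.prems digit_split_iff_last_digit by blast
    moreover have "i + j + k = (i div p + j div p + k div p) * p + (i mod p + j mod p + k mod p)"
      using div_mult_mod_eq[of i p] div_mult_mod_eq[of j p] div_mult_mod_eq[of k p]
      by (simp add: algebra_simps)
    ultimately show ?thesis
      by simp
  qed simp
qed

definition digit_triples :: "nat \<Rightarrow> nat \<Rightarrow> (nat \<times> nat \<times> nat) set" where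
  "digit_triples p n = {(i, j, k). digit_split p i j k n}"

lemma digit_triples_0:
  assumes "1 < p"
  shows "digit_triples p 0 = {(0, 0, 0)}"
  by (auto simp: digit_triples_def dest: digit_split_imp_sum[OF assms])
    (simp add: digit_split_def pdigit_def)

definition digit_join :: "nat \<Rightarrow> (nat \<times> nat \<times> nat) \<times> (nat \<times> nat \<times> nat) \<Rightarrow> nat \<times> nat \<times> nat" where
  "digit_join p = (\<lambda>((i, j, k), (i0, j0, k0)). (i0 + p * i, j0 + p * j, k0 + p * k))"

definition digit_unjoin :: "nat \<Rightarrow> nat \<times> nat \<times> nat \<Rightarrow> (nat \<times> nat \<times> nat) \<times> (nat \<times> nat \<times> nat)" where
  "digit_unjoin p = (\<lambda>(i, j, k). ((i div p, j div p, k div p), (i mod p, j mod p, k mod p)))"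

lemma digit_join_digit_unjoin: "digit_join p (digit_unjoin p t) = t"
  by (auto simp: digit_join_def digit_unjoin_def split: prod.split)

lemma digit_unjoin_digit_join:
  assumes "1 < p" and "w \<in> digit_triples p (n div p) \<times> triples_with_sum (n mod p)"
  shows "digit_unjoin p (digit_join p w) = w"
proof -
  have "n mod p < p"
    using assms(1) by simp
  then show ?thesis
    using assms(2) by (auto simp: digit_join_def digit_unjoin_def triples_with_sum_def)
qed

lemma digit_unjoin_mem:
  assumes "t \<in> digit_triples p n"
  shows "digit_unjoin p t \<in> digit_triples p (n div p) \<times> triples_with_sum (n mod p)"
proof -
  obtain i j k where t: "t = (i, j, k)"
    by (cases t)
  show ?thesis
    using assms digit_split_iff_last_digit[of p i j k n]
    by (simp add: t digit_unjoin_def digit_triples_def triples_with_sum_def)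
qed

lemma bij_betw_digit_join:
  assumes "1 < p"
  shows "bij_betw (digit_join p)
    (digit_triples p (n div p) \<times> triples_with_sum (n mod p)) (digit_triples p n)"
proof (rule bij_betw_byWitness[where f'="digit_unjoin p"])
  show "\<forall>w\<in>digit_triples p (n div p) \<times> triples_with_sum (n mod p). digit_unjoin p (digit_join p w) = w"
    using digit_unjoin_digit_join[OF assms] by blast
  show "\<forall>t\<in>digit_triples p n. digit_join p (digit_unjoin p t) = t"
    by (simp add: digit_join_digit_unjoin)
  show "digit_unjoin p ` digit_triples p n \<subseteq> digit_triples p (n div p) \<times> triples_with_sum (n mod p)"
    using digit_unjoin_mem by blast
  show "digit_join p ` (digit_triples p (n div p) \<times> triples_with_sum (n mod p)) \<subseteq> digit_triples p n"
  proof (rule image_subsetI)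
    fix w
    assume "w \<in> digit_triples p (n div p) \<times> triples_with_sum (n mod p)"
    then obtain i j k i0 j0 k0 where w: "w = ((i, j, k), (i0, j0, k0))"
      and ijk: "(i, j, k) \<in> digit_triples p (n div p)"
      and ijk0: "(i0, j0, k0) \<in> triples_with_sum (n mod p)"
      by (metis mem_Sigma_iff prod.collapse)
    have "n mod p < p"
      using assms by simp
    with ijk0 have "i0 < p" "j0 < p" "k0 < p"
      by (auto simp: triples_with_sum_def)
    then show "digit_join p w \<in> digit_triples p n"
      using ijk ijk0 digit_split_iff_last_digit[of p "i0 + p * i" "j0 + p * j" "k0 + p * k" n]
      by (simp add: w digit_join_def digit_triples_def triples_with_sum_def)
  qed
qed

lemma (in commuting_sigma_derivation) \<delta>_power_expansion_step:
  assumes "((\<delta> ^^ p) ^^ m) (a * x * b) =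
    (\<Sum>y\<in>Y. of_nat (\<alpha> y) * skew_monomial (\<sigma> ^^ p) (\<delta> ^^ p) a x b y)"
  shows "(\<delta> ^^ (r + p * m)) (a * x * b) =
    (\<Sum>w\<in>Y \<times> triples_with_sum r.
       of_nat (\<alpha> (fst w) * trinomial (snd w)) * skew_monomial \<sigma> \<delta> a x b (digit_join p w))"
proof -
  have monomial: "(\<delta> ^^ r) (skew_monomial (\<sigma> ^^ p) (\<delta> ^^ p) a x b y) =
      (\<Sum>z\<in>triples_with_sum r. of_nat (trinomial z) * skew_monomial \<sigma> \<delta> a x b (digit_join p (y, z)))"
    for y
    by (cases y) (simp add: skew_monomial_funpow \<delta>_power_skew_monomial digit_join_def split_def)
  have "(\<delta> ^^ (r + p * m)) (a * x * b) = (\<delta> ^^ r) (((\<delta> ^^ p) ^^ m) (a * x * b))"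
    by (simp add: funpow_add funpow_mult)
  also have "\<dots> = (\<Sum>y\<in>Y. of_nat (\<alpha> y) * (\<delta> ^^ r) (skew_monomial (\<sigma> ^^ p) (\<delta> ^^ p) a x b y))"
    by (simp add: assms additive.sum[OF additive_\<delta>_power] additive_of_nat_mult[OF additive_\<delta>_power])
  also have "\<dots> = (\<Sum>y\<in>Y. \<Sum>z\<in>triples_with_sum r.
      of_nat (\<alpha> y * trinomial z) * skew_monomial \<sigma> \<delta> a x b (digit_join p (y, z)))"
    by (simp add: monomial sum_distrib_left mult.assoc)
  finally show ?thesis
    by (simp add: sum.cartesian_product split_def)
qed

theorem commuting_sigma_derivation_digit_expansion:
  fixes \<sigma> \<delta> :: "'a::ring_1 \<Rightarrow> 'a"
  assumes "prime p" and "of_nat p = (0::'a)" and "commuting_sigma_derivation \<sigma> \<delta>"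
  shows "\<exists>\<alpha>. (\<forall>t\<in>digit_triples p n. \<not> p dvd \<alpha> t) \<and>
    (\<delta> ^^ n) (a * x * b) = (\<Sum>t\<in>digit_triples p n. of_nat (\<alpha> t) * skew_monomial \<sigma> \<delta> a x b t)"
  using assms(3)
proof (induction n arbitrary: \<sigma> \<delta> rule: less_induct)
  case (less n)
  interpret commuting_sigma_derivation \<sigma> \<delta>
    by (fact less.prems)
  have "1 < p"
    using assms(1) by (rule prime_gt_1_nat)
  show ?case
  proof (cases "n = 0")
    case True
    then show ?thesis
      using \<open>1 < p\<close> by (intro exI[of _ "\<lambda>_. 1"]) (simp add: digit_triples_0 skew_monomial_def)
  next
    case False
    define m r where "m = n div p" and "r = n mod p"
    have "m < n"
      using False \<open>1 < p\<close> by (simp add: m_def)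
    obtain \<alpha> where \<alpha>_prime_to_p: "\<forall>y\<in>digit_triples p m. \<not> p dvd \<alpha> y"
      and expansion: "((\<delta> ^^ p) ^^ m) (a * x * b) =
        (\<Sum>y\<in>digit_triples p m. of_nat (\<alpha> y) * skew_monomial (\<sigma> ^^ p) (\<delta> ^^ p) a x b y)"
      using less.IH[OF \<open>m < n\<close> frobenius[OF assms(1,2)]] by blast
    define \<beta> where "\<beta> t = \<alpha> (fst (digit_unjoin p t)) * trinomial (snd (digit_unjoin p t))" for t
    have "(\<delta> ^^ n) (a * x * b) = (\<Sum>w\<in>digit_triples p m \<times> triples_with_sum r.
        of_nat (\<beta> (digit_join p w)) * skew_monomial \<sigma> \<delta> a x b (digit_join p w))"
      using \<delta>_power_expansion_step[OF expansion, of r] digit_unjoin_digit_join[OF \<open>1 < p\<close>]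
      by (simp add: \<beta>_def m_def r_def)
    also have "\<dots> = (\<Sum>t\<in>digit_triples p n. of_nat (\<beta> t) * skew_monomial \<sigma> \<delta> a x b t)"
      unfolding m_def r_def by (rule sum.reindex_bij_betw[OF bij_betw_digit_join[OF \<open>1 < p\<close>]])
    finally have "(\<delta> ^^ n) (a * x * b) =
        (\<Sum>t\<in>digit_triples p n. of_nat (\<beta> t) * skew_monomial \<sigma> \<delta> a x b t)" .
    moreover have "\<not> p dvd \<beta> t" if "t \<in> digit_triples p n" for t
    proof -
      obtain y i0 j0 k0 where t: "digit_unjoin p t = (y, (i0, j0, k0))"
        by (metis prod.exhaust)
      then have "y \<in> digit_triples p m" and "i0 + j0 + k0 < p"
        using digit_unjoin_mem[OF that] \<open>1 < p\<close> by (auto simp: m_def triples_with_sum_def)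
      then show ?thesis
        using \<alpha>_prime_to_p prime_not_dvd_trinomial[OF assms(1)] assms(1)
        by (simp add: \<beta>_def t prime_dvd_mult_iff)
    qed
    ultimately show ?thesis
      by (intro exI[of _ \<beta>]) blast
  qed
qed

corollary commuting_sigma_derivation_digit_expansion_residues:
  fixes \<sigma> \<delta> :: "'a::ring_1 \<Rightarrow> 'a"
  assumes "prime p" and "of_nat p = (0::'a)" and "commuting_sigma_derivation \<sigma> \<delta>"
  shows "\<exists>\<alpha>. (\<forall>t\<in>digit_triples p n. 0 < \<alpha> t \<and> \<alpha> t < p) \<and>
    (\<delta> ^^ n) (a * x * b) = (\<Sum>t\<in>digit_triples p n. of_nat (\<alpha> t) * skew_monomial \<sigma> \<delta> a x b t)"
proof -
  obtain \<alpha> where "\<forall>t\<in>digit_triples p n. \<not> p dvd \<alpha> t"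
    and "(\<delta> ^^ n) (a * x * b) = (\<Sum>t\<in>digit_triples p n. of_nat (\<alpha> t) * skew_monomial \<sigma> \<delta> a x b t)"
    using commuting_sigma_derivation_digit_expansion[OF assms] by blast
  then show ?thesis
    using prime_gt_1_nat[OF assms(1)]
    by (intro exI[of _ "\<lambda>t. \<alpha> t mod p"])
      (simp add: dvd_eq_mod_eq_0 of_nat_mod_eq_if_of_nat_eq_0[OF assms(2)])
qed

lemma bounded_digit_triples:
  assumes "1 < p"
  shows "{(i, j, k). i \<le> n \<and> j \<le> n \<and> k \<le> n \<and> digit_split p i j k n} = digit_triples p n"
  using digit_split_imp_sum[OF assms] by (fastforce simp: digit_triples_def)

lemma skew_monomial_altdef:
  "i + j + k = n \<Longrightarrow>
    skew_monomial \<sigma> \<delta> a x b (i, j, k) = (\<delta> ^^ i) ((\<sigma> ^^ (n - i)) a) * (\<delta> ^^ j) ((\<sigma> ^^ k) x) * (\<delta> ^^ k) b"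
  by (auto simp: skew_monomial_def)

theorem lemma3p2p2:
  fixes p :: nat and \<sigma> \<delta> :: "'a::ring_1 \<Rightarrow> 'a"
  assumes "prime p"
    and "of_nat p = (0::'a)"
    and "noetherian_ring TYPE('a)"
    and "skew_derivation \<sigma> \<delta>"
    and "\<sigma> \<circ> \<delta> = \<delta> \<circ> \<sigma>"
  shows "(\<forall>i j k n. digit_split p i j k n \<longrightarrow> i + j + k = n) \<and>
    (\<forall>(a::'a) b x n. \<exists>\<alpha> :: nat \<Rightarrow> nat \<Rightarrow> nat \<Rightarrow> nat.
       (\<forall>i j k. digit_split p i j k n \<longrightarrow> 0 < \<alpha> i j k \<and> \<alpha> i j k < p) \<and>
       (\<delta> ^^ n) (a * x * b) =
         (\<Sum>(i, j, k) \<in> {(i, j, k). i \<le> n \<and> j \<le> n \<and> k \<le> n \<and> digit_split p i j k n}.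
            of_nat (\<alpha> i j k) * ((\<delta> ^^ i) ((\<sigma> ^^ (n - i)) a)) * ((\<delta> ^^ j) ((\<sigma> ^^ k) x)) * ((\<delta> ^^ k) b)))"
proof -
  have "1 < p"
    using assms(1) by (rule prime_gt_1_nat)
  have "commuting_sigma_derivation \<sigma> \<delta>"
    using assms(4,5) by unfold_locales
      (auto simp: skew_derivation_def ring_automorphism_def fun_eq_iff)
  show ?thesis
    apply (intro conjI allI impI)
    subgoal
      by (rule digit_split_imp_sum[OF \<open>1 < p\<close>])
    subgoal for a b x n
    proof -
      obtain \<alpha> where "\<forall>t\<in>digit_triples p n. 0 < \<alpha> t \<and> \<alpha> t < p"
        and "(\<delta> ^^ n) (a * x * b) =
          (\<Sum>t\<in>digit_triples p n. of_nat (\<alpha> t) * skew_monomial \<sigma> \<delta> a x b t)"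
        using commuting_sigma_derivation_digit_expansion_residues[OF assms(1,2)
            \<open>commuting_sigma_derivation \<sigma> \<delta>\<close>] by blast
      then show ?thesis
        unfolding bounded_digit_triples[OF \<open>1 < p\<close>]
        using digit_split_imp_sum[OF \<open>1 < p\<close>]
        by (intro exI[of _ "\<lambda>i j k. \<alpha> (i, j, k)"])
          (auto simp: digit_triples_def skew_monomial_altdef mult.assoc intro!: sum.cong)
    qed
    done
qed

end
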